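(* Let $0<\alpha<1$ and let $g_\alpha$ be the generalized conical spacetime metric on $\mathbb{R}^4$ (described in the context), $S=\{0\}\times\mathbb{R}^3$, and $e$ the Euclidean metric on $\mathbb{R}^4$. Suppose the generalized curve $\gamma\in\mathcal{G}[\mathbb{R},\mathbb{R}^4]$ satisfies $e(\dot\gamma,\dot\gamma)=1$ in $\mathcal{G}(\mathbb{R})$ and $g_\alpha(\dot\gamma,\dot\gamma)$ is uniformly strictly negative, i.e., for any representatives $(\gamma_\varepsilon)_{\varepsilon\in(0,1]}$ of $\gamma$ and $(g_\alpha^\varepsilon)_{\varepsilon\in(0,1]}$ of $g_\alpha$ there exist $q\in[0,\infty)$ and $\varepsilon_0\in(0,1]$ such that $$g_\alpha^\varepsilon(\gamma_\varepsilon(s))(\dot\gamma_\varepsilon(s),\dot\gamma_\varepsilon(s))\le -\varepsilon^q\qquad(s\in\mathbb{R},\ 0<\varepsilon<\varepsilon_0).$$ Then there is a unique $\tilde s\in(\widetilde{\mathbb{R}})_c$ such that $\gamma(\tilde s)\in\widetilde S_c$.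
   Context: Generalized conical spacetime: with coordinates $(t,x,y,z)$, $g_\alpha$ is the Colombeau generalized Lorentz metric represented by $g_\alpha^\varepsilon=-dt^2+\rho^\varepsilon$, $\rho^\varepsilon = (\frac{1+\alpha^2}{2}+\frac{1-\alpha^2}{2}f_1^\varepsilon)dx^2 + (\frac{1+\alpha^2}{2}-\frac{1-\alpha^2}{2}f_1^\varepsilon)dy^2 + (1-\alpha^2)f_2^\varepsilon\,dx\,dy + dz^2$, where $f_j^\varepsilon = f_j*\psi_\varepsilon$ are mollifications of $f_1=\frac{x^2-y^2}{x^2+y^2}$, $f_2=\frac{2xy}{x^2+y^2}$ by a real-valued delta net, chosen such that there is $\beta>0$ with $\rho^\varepsilon(x,y,z)(v,v)\ge\beta(v_1^2+v_2^2)+v_3^2$ for all points, all $v\in\mathbb{R}^3$ and all $\varepsilon\in(0,1]$ (e.g. $\psi_\varepsilon(x,y)=\varepsilon^{-2}\varphi(x/\varepsilon,y/\varepsilon)$ with $\varphi\in\mathcal S(\mathbb{R}^2)$ real, $\int\varphi=1$, and either $\varphi\ge0$ or $\alpha^2>(\|\varphi\|_{L^1}-1)/(\|\varphi\|_{L^1}+1)$). Colombeau notions (special algebra): $\mathcal{G}(\mathbb{R})$ is the quotient of moderate nets of smooth functions (each derivative $O(\varepsilon^{-N})$ uniformly on compacts) by negligible nets (each derivative $O(\varepsilon^m)$ for all $m$ uniformly on compacts). $\mathcal{G}[\mathbb{R},\mathbb{R}^4]$ is the space of c-bounded generalized maps: classes of moderate nets $(\gamma_\varepsilon)$ of smooth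 maps $\mathbb{R}\to\mathbb{R}^4$ such that every compact $K\subset\mathbb{R}$ has a compact $K'\subset\mathbb{R}^4$ with $\gamma_\varepsilon(K)\subset K'$ for small $\varepsilon$, modulo negligible nets. $(\widetilde{\mathbb{R}})_c$ is the set of compactly supported generalized points: nets $(s_\varepsilon)$ of reals bounded for small $\varepsilon$, modulo $|s_\varepsilon-t_\varepsilon|=O(\varepsilon^m)$ for all $m$; $\widetilde S_c$ is defined analogously with nets of points in $S$. The generalized point value $\gamma(\tilde s)$ is the class of $(\gamma_\varepsilon(s_\varepsilon))$. *)

theory Defs
  imports "HOL-Analysis.Analysis"
begin

definition dpx :: "(real \<times> real \<Rightarrow> real) \<Rightarrow> real \<times> real \<Rightarrow> real" where
  "dpx f = (\<lambda>p. deriv (\<lambda>t. f (t, snd p)) (fst p))"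

definition dpy :: "(real \<times> real \<Rightarrow> real) \<Rightarrow> real \<times> real \<Rightarrow> real" where
  "dpy f = (\<lambda>p. deriv (\<lambda>t. f (fst p, t)) (snd p))"

text \<open>Iterated partial derivative along a word (True = d/dx, False = d/dy).\<close>
fun dpw :: "bool list \<Rightarrow> (real \<times> real \<Rightarrow> real) \<Rightarrow> real \<times> real \<Rightarrow> real" where
  "dpw [] f = f"
| "dpw (b # bs) f = (if b then dpx else dpy) (dpw bs f)"

definition schwartz :: "(real \<times> real \<Rightarrow> real) \<Rightarrow> bool" where
  "schwartz \<phi> \<longleftrightarrow>
     (\<forall>w. continuous_on UNIV (dpw w \<phi>)
        \<and> (\<forall>p. ((\<lambda>t. dpw w \<phi> (t, snd p)) has_real_derivative dpx (dpw w \<phi>) p) (at (fst p))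
             \<and> ((\<lambda>t. dpw w \<phi> (fst p, t)) has_real_derivative dpy (dpw w \<phi>) p) (at (snd p)))
        \<and> (\<forall>k::nat. bounded (range (\<lambda>p. (1 + norm p) ^ k * dpw w \<phi> p))))"

definition f1 :: "real \<times> real \<Rightarrow> real" where
  "f1 p = ((fst p)\<^sup>2 - (snd p)\<^sup>2) / ((fst p)\<^sup>2 + (snd p)\<^sup>2)"

definition f2 :: "real \<times> real \<Rightarrow> real" where
  "f2 p = (2 * fst p * snd p) / ((fst p)\<^sup>2 + (snd p)\<^sup>2)"

definition delta_net :: "(real \<times> real \<Rightarrow> real) \<Rightarrow> real \<Rightarrow> real \<times> real \<Rightarrow> real" where
  "delta_net \<phi> \<epsilon> w = \<phi> (fst w / \<epsilon>, snd w / \<epsilon>) / \<epsilon>\<^sup>2"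

definition moll :: "(real \<times> real \<Rightarrow> real) \<Rightarrow> real \<Rightarrow> (real \<times> real \<Rightarrow> real) \<Rightarrow> real \<times> real \<Rightarrow> real" where
  "moll \<phi> \<epsilon> f p = (\<integral>w. f (p - w) * delta_net \<phi> \<epsilon> w \<partial>lborel)"

definition rho :: "real \<Rightarrow> (real \<times> real \<Rightarrow> real) \<Rightarrow> real \<Rightarrow> real \<Rightarrow> real \<Rightarrow> real \<Rightarrow> real \<Rightarrow> real \<Rightarrow> real \<Rightarrow> real" where
  "rho \<alpha> \<phi> \<epsilon> x y z v1 v2 v3 =
     ((1 + \<alpha>\<^sup>2) / 2 + (1 - \<alpha>\<^sup>2) / 2 * moll \<phi> \<epsilon> f1 (x, y)) * v1\<^sup>2
   + ((1 + \<alpha>\<^sup>2) / 2 - (1 - \<alpha>\<^sup>2) / 2 * moll \<phi> \<epsilon> f1 (x, y)) * v2\<^sup>2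
   + (1 - \<alpha>\<^sup>2) * moll \<phi> \<epsilon> f2 (x, y) * v1 * v2
   + v3\<^sup>2"

text \<open>g_alpha^eps(p)(v,v) on R^4 with coordinates (t,x,y,z) = components 1,2,3,4.\<close>
definition gmet :: "real \<Rightarrow> (real \<times> real \<Rightarrow> real) \<Rightarrow> real \<Rightarrow> real^4 \<Rightarrow> real^4 \<Rightarrow> real" where
  "gmet \<alpha> \<phi> \<epsilon> p v = - (v $ 1)\<^sup>2 + rho \<alpha> \<phi> \<epsilon> (p $ 2) (p $ 3) (p $ 4) (v $ 2) (v $ 3) (v $ 4)"

definition vd :: "nat \<Rightarrow> (real \<Rightarrow> 'a::real_normed_vector) \<Rightarrow> real \<Rightarrow> 'a" where
  "vd k f = ((\<lambda>g s. vector_derivative g (at s)) ^^ k) f"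

definition smooth_curve :: "(real \<Rightarrow> 'a::real_normed_vector) \<Rightarrow> bool" where
  "smooth_curve f \<longleftrightarrow> (\<forall>k s. (vd k f has_vector_derivative vd (Suc k) f s) (at s))"

text \<open>"for small eps": for all eps in (0, eps0) for some eps0 in (0,1].\<close>
definition moderate_net :: "(real \<Rightarrow> real \<Rightarrow> 'a::real_normed_vector) \<Rightarrow> bool" where
  "moderate_net u \<longleftrightarrow> (\<forall>\<epsilon>\<in>{0<..1}. smooth_curve (u \<epsilon>)) \<and>
     (\<forall>K k. compact K \<longrightarrow> (\<exists>N::nat. \<exists>C. \<exists>\<epsilon>0\<in>{0<..1}. \<forall>\<epsilon>\<in>{0<..<\<epsilon>0}. \<forall>s\<in>K.
        norm (vd k (u \<epsilon>) s) \<le> C * (1 / \<epsilon>) ^ N))"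

definition negligible_net :: "(real \<Rightarrow> real \<Rightarrow> 'a::real_normed_vector) \<Rightarrow> bool" where
  "negligible_net u \<longleftrightarrow>
     (\<forall>K k m. compact K \<longrightarrow> (\<exists>C. \<exists>\<epsilon>0\<in>{0<..1}. \<forall>\<epsilon>\<in>{0<..<\<epsilon>0}. \<forall>s\<in>K.
        norm (vd k (u \<epsilon>) s) \<le> C * \<epsilon> ^ m))"

text \<open>Representatives of elements of G[R,R^4]: moderate, c-bounded nets.\<close>
definition c_bounded_net :: "(real \<Rightarrow> real \<Rightarrow> real^4) \<Rightarrow> bool" where
  "c_bounded_net \<gamma> \<longleftrightarrow> (\<forall>K. compact K \<longrightarrow>
     (\<exists>K'. compact K' \<and> (\<exists>\<epsilon>0\<in>{0<..1}. \<forall>\<epsilon>\<in>{0<..<\<epsilon>0}. \<gamma> \<epsilon> ` K \<subseteq> K')))"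

definition gen_curve_rep :: "(real \<Rightarrow> real \<Rightarrow> real^4) \<Rightarrow> bool" where
  "gen_curve_rep \<gamma> \<longleftrightarrow> moderate_net \<gamma> \<and> c_bounded_net \<gamma>"

definition cs_point :: "(real \<Rightarrow> 'a::real_normed_vector) \<Rightarrow> bool" where
  "cs_point s \<longleftrightarrow> (\<exists>C. \<exists>\<epsilon>0\<in>{0<..1}. \<forall>\<epsilon>\<in>{0<..<\<epsilon>0}. norm (s \<epsilon>) \<le> C)"

definition pt_equiv :: "(real \<Rightarrow> 'a::real_normed_vector) \<Rightarrow> (real \<Rightarrow> 'a) \<Rightarrow> bool" where
  "pt_equiv s t \<longleftrightarrow> (\<forall>m::nat. \<exists>C. \<exists>\<epsilon>0\<in>{0<..1}. \<forall>\<epsilon>\<in>{0<..<\<epsilon>0}.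
     norm (s \<epsilon> - t \<epsilon>) \<le> C * \<epsilon> ^ m)"

text \<open>Membership of a generalized point (given by a representative net p) in S~_c.\<close>
definition in_gen_c :: "'a::real_normed_vector set \<Rightarrow> (real \<Rightarrow> 'a) \<Rightarrow> bool" where
  "in_gen_c S p \<longleftrightarrow> (\<exists>q. (\<forall>\<epsilon>\<in>{0<..1}. q \<epsilon> \<in> S) \<and> cs_point q \<and> pt_equiv p q)"

definition Sslice :: "(real^4) set" where
  "Sslice = {p. p $ 1 = 0}"

end

theory Submission
  imports Defs
begin

text \<open>
  Uniform positivity of \<open>\<rho>\<close> together with \<open>g\<^sub>\<alpha>(\<gamma>\<acute>, \<gamma>\<acute>) \<le> 0\<close> gives
  \<open>(\<gamma>\<acute>\<^sup>0)\<^sup>2 \<ge> c |\<gamma>\<acute>|\<^sup>2\<close>, and since \<open>|\<gamma>\<acute>|\<^sup>2\<close> is negligibly close to 1, the time component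
  \<open>\<gamma>\<^sup>0\<^sub>\<epsilon>\<close> has speed at least some \<open>a > 0\<close> on every compact parameter interval, uniformly for
  small \<open>\<epsilon>\<close>. As \<open>\<gamma>\<^sub>\<epsilon>(0)\<close> stays bounded, \<open>\<gamma>\<^sup>0\<^sub>\<epsilon>\<close> then vanishes at some \<open>s\<^sub>\<epsilon>\<close> in a fixed
  interval; and for any other \<open>s\<acute>\<close> with \<open>\<gamma>(s\<acute>) \<in> S\<close> the mean value theorem gives
  \<open>a |s\<^sub>\<epsilon> - s\<acute>\<^sub>\<epsilon>| \<le> |\<gamma>\<^sup>0\<^sub>\<epsilon>(s\<acute>\<^sub>\<epsilon>)|\<close>, which is negligible.
  Of the hypotheses on \<open>\<alpha>\<close>, \<open>\<phi>\<close> and the timelike bound only their consequences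
  \<open>\<rho> \<ge> \<beta>(v\<^sub>1\<^sup>2 + v\<^sub>2\<^sup>2) + v\<^sub>3\<^sup>2\<close> and \<open>g\<^sub>\<alpha>(\<gamma>\<acute>, \<gamma>\<acute>) \<le> 0\<close> are needed.
\<close>

lemma deriv_ge_imp_diff_ge:
  fixes f f' :: "real \<Rightarrow> real"
  assumes "x \<le> y"
    and deriv: "\<And>t. t \<in> {x..y} \<Longrightarrow> (f has_real_derivative f' t) (at t)"
    and bound: "\<And>t. t \<in> {x..y} \<Longrightarrow> a \<le> f' t"
  shows "a * (y - x) \<le> f y - f x"
proof (cases "x = y")
  case False
  with \<open>x \<le> y\<close> obtain z where z: "x < z" "z < y" "f y - f x = (y - x) * f' z"
    using MVT2[of x y f f'] deriv by force
  have "a * (y - x) \<le> f' z * (y - x)"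
    using bound[of z] z by (intro mult_right_mono) auto
  with z show ?thesis by (simp add: mult.commute)
qed simp

lemma abs_ge_continuous_obtains_sign:
  fixes g :: "real \<Rightarrow> real"
  assumes cont: "continuous_on {l..u} g" and "0 < a"
    and bound: "\<And>t. t \<in> {l..u} \<Longrightarrow> a \<le> \<bar>g t\<bar>"
  obtains \<sigma> where "\<bar>\<sigma>\<bar> = 1" "\<And>t. t \<in> {l..u} \<Longrightarrow> a \<le> \<sigma> * g t"
proof -
  have conn: "connected (g ` {l..u})"
    using connected_continuous_image[OF cont] by simp
  have "0 \<notin> g ` {l..u}"
    using bound \<open>0 < a\<close> by force
  then have "(\<forall>t\<in>{l..u}. 0 < g t) \<or> (\<forall>t\<in>{l..u}. g t < 0)"
    using connectedD_interval[OF conn] by (metis image_eqI linorder_not_le)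
  then show thesis
  proof
    assume "\<forall>t\<in>{l..u}. 0 < g t"
    then show thesis using that[of 1] bound by force
  next
    assume "\<forall>t\<in>{l..u}. g t < 0"
    then show thesis using that[of "-1"] bound by force
  qed
qed

lemma abs_diff_ge_of_abs_deriv_ge:
  fixes f f' :: "real \<Rightarrow> real"
  assumes deriv: "\<And>t. t \<in> {l..u} \<Longrightarrow> (f has_real_derivative f' t) (at t)"
    and cont: "continuous_on {l..u} f'" and "0 < a"
    and bound: "\<And>t. t \<in> {l..u} \<Longrightarrow> a \<le> \<bar>f' t\<bar>"
    and "x \<in> {l..u}" "y \<in> {l..u}"
  shows "a * \<bar>x - y\<bar> \<le> \<bar>f x - f y\<bar>"
proof -
  obtain \<sigma> where \<sigma>: "\<bar>\<sigma>\<bar> = 1" "\<And>t. t \<in> {l..u} \<Longrightarrow> a \<le> \<sigma> * f' t"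
    using abs_ge_continuous_obtains_sign[OF cont \<open>0 < a\<close> bound] by blast
  have oriented: "a * (y' - x') \<le> \<bar>f x' - f y'\<bar>"
    if "x' \<le> y'" "x' \<in> {l..u}" "y' \<in> {l..u}" for x' y'
  proof -
    have "a * (y' - x') \<le> \<sigma> * f y' - \<sigma> * f x'"
      using that by (intro deriv_ge_imp_diff_ge[where f' = "\<lambda>t. \<sigma> * f' t"])
        (auto intro!: DERIV_cmult deriv \<sigma>(2))
    also have "\<dots> \<le> \<bar>f x' - f y'\<bar>"
      by (metis \<sigma>(1) abs_ge_self abs_minus_commute abs_mult mult.left_neutral
          right_diff_distrib)
    finally show ?thesis .
  qed
  show ?thesis
    using oriented[of x y] oriented[of y x] assms(5,6)
    by (cases "x \<le> y") (auto simp: abs_minus_commute)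
qed

lemma exists_zero_of_abs_deriv_ge:
  fixes f f' :: "real \<Rightarrow> real"
  assumes deriv: "\<And>t. t \<in> {-T..T} \<Longrightarrow> (f has_real_derivative f' t) (at t)"
    and cont: "continuous_on {-T..T} f'" and "0 < a"
    and bound: "\<And>t. t \<in> {-T..T} \<Longrightarrow> a \<le> \<bar>f' t\<bar>"
    and start: "\<bar>f 0\<bar> < a * T"
  shows "\<exists>t\<in>{-T..T}. f t = 0"
proof -
  have "0 < T"
    using start \<open>0 < a\<close> by (metis abs_ge_zero le_less_trans zero_less_mult_pos)
  obtain \<sigma> where \<sigma>: "\<bar>\<sigma>\<bar> = 1" "\<And>t. t \<in> {-T..T} \<Longrightarrow> a \<le> \<sigma> * f' t"
    using abs_ge_continuous_obtains_sign[OF cont \<open>0 < a\<close> bound] by blast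
  define g where "g t = \<sigma> * f t" for t
  have g_deriv: "(g has_real_derivative \<sigma> * f' t) (at t)" if "t \<in> {-T..T}" for t
    unfolding g_def using deriv[OF that] by (rule DERIV_cmult)
  have g_growth: "a * (y - x) \<le> g y - g x" if "-T \<le> x" "x \<le> y" "y \<le> T" for x y
    using that by (intro deriv_ge_imp_diff_ge[where f' = "\<lambda>t. \<sigma> * f' t"] g_deriv \<sigma>(2)) auto
  have "\<bar>g 0\<bar> < a * T"
    using start \<sigma>(1) by (simp add: g_def abs_mult)
  moreover have "a * T \<le> g T - g 0"
    using g_growth[of 0 T] \<open>0 < T\<close> by simp
  moreover have "a * T \<le> g 0 - g (-T)"
    using g_growth[of "-T" 0] \<open>0 < T\<close> by simp
  ultimately have "g (-T) \<le> 0" "0 \<le> g T"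
    by (auto simp: abs_less_iff)
  moreover have "continuous_on {-T..T} g"
    using g_deriv by (meson DERIV_isCont continuous_at_imp_continuous_on)
  ultimately obtain t where "t \<in> {-T..T}" "g t = 0"
    using IVT'[of g "-T" 0 T] \<open>0 < T\<close> by auto
  then show ?thesis
    using \<sigma>(1) by (auto simp: g_def)
qed

lemma eventually_at_right_0_iff:
  "eventually P (at_right (0::real)) \<longleftrightarrow> (\<exists>\<epsilon>0\<in>{0<..1}. \<forall>\<epsilon>\<in>{0<..<\<epsilon>0}. P \<epsilon>)"
  unfolding eventually_at_right_field
proof
  assume "\<exists>b>0. \<forall>y>0. y < b \<longrightarrow> P y"
  then obtain b where "0 < b" "\<forall>y>0. y < b \<longrightarrow> P y" by blast
  then show "\<exists>\<epsilon>0\<in>{0<..1}. \<forall>\<epsilon>\<in>{0<..<\<epsilon>0}. P \<epsilon>"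
    by (intro bexI[of _ "min b 1"]) auto
next
  assume "\<exists>\<epsilon>0\<in>{0<..1}. \<forall>\<epsilon>\<in>{0<..<\<epsilon>0}. P \<epsilon>"
  then show "\<exists>b>0. \<forall>y>0. y < b \<longrightarrow> P y" by auto
qed

lemma eventually_at_right_0_if_all:
  "(\<And>\<epsilon>. \<epsilon> \<in> {0<..1} \<Longrightarrow> P \<epsilon>) \<Longrightarrow> eventually P (at_right (0::real))"
  unfolding eventually_at_right_0_iff by (intro bexI[of _ 1]) auto

lemma cs_point_iff_eventually:
  "cs_point s \<longleftrightarrow> (\<exists>C. \<forall>\<^sub>F \<epsilon> in at_right 0. norm (s \<epsilon>) \<le> C)"
  unfolding cs_point_def eventually_at_right_0_iff ..

lemma pt_equiv_iff_eventually:
  "pt_equiv s t \<longleftrightarrow> (\<forall>m::nat. \<exists>C. \<forall>\<^sub>F \<epsilon> in at_right 0. norm (s \<epsilon> - t \<epsilon>) \<le> C * \<epsilon> ^ m)"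
  unfolding pt_equiv_def eventually_at_right_0_iff ..

lemma c_bounded_net_eventually_bounded:
  assumes "c_bounded_net \<gamma>" "compact K"
  obtains R where "\<forall>\<^sub>F \<epsilon> in at_right 0. \<forall>t\<in>K. norm (\<gamma> \<epsilon> t) \<le> R"
proof -
  obtain K' where "compact K'" and K': "\<forall>\<^sub>F \<epsilon> in at_right 0. \<gamma> \<epsilon> ` K \<subseteq> K'"
    using assms unfolding c_bounded_net_def eventually_at_right_0_iff by meson
  obtain R where R: "\<And>x. x \<in> K' \<Longrightarrow> norm x \<le> R"
    using compact_imp_bounded[OF \<open>compact K'\<close>] unfolding bounded_iff by blast
  from K' have "\<forall>\<^sub>F \<epsilon> in at_right 0. \<forall>t\<in>K. norm (\<gamma> \<epsilon> t) \<le> R"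
    by (rule eventually_mono) (use R in blast)
  then show thesis ..
qed

lemma cs_point_comp_c_bounded_net:
  assumes "c_bounded_net \<gamma>" "cs_point s"
  shows "cs_point (\<lambda>\<epsilon>. \<gamma> \<epsilon> (s \<epsilon>))"
proof -
  obtain C where "\<forall>\<^sub>F \<epsilon> in at_right 0. norm (s \<epsilon>) \<le> C"
    using \<open>cs_point s\<close> unfolding cs_point_iff_eventually by blast
  then have C: "\<forall>\<^sub>F \<epsilon> in at_right 0. s \<epsilon> \<in> {-C..C}"
    by eventually_elim (auto simp: abs_le_iff)
  obtain R where "\<forall>\<^sub>F \<epsilon> in at_right 0. \<forall>t\<in>{-C..C}. norm (\<gamma> \<epsilon> t) \<le> R"
    using c_bounded_net_eventually_bounded[OF \<open>c_bounded_net \<gamma>\<close> compact_Icc] .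
  with C have "\<forall>\<^sub>F \<epsilon> in at_right 0. norm (\<gamma> \<epsilon> (s \<epsilon>)) \<le> R"
    by eventually_elim blast
  then show ?thesis
    unfolding cs_point_iff_eventually by blast
qed

lemma negligible_net_eventually_small:
  assumes "negligible_net u" "compact K" "0 < r"
  shows "\<forall>\<^sub>F \<epsilon> in at_right 0. \<forall>s\<in>K. norm (u \<epsilon> s) < r"
proof -
  obtain C where C: "\<forall>\<^sub>F \<epsilon> in at_right 0. \<forall>s\<in>K. norm (vd 0 (u \<epsilon>) s) \<le> C * \<epsilon> ^ 1"
    using assms(1,2) unfolding negligible_net_def eventually_at_right_0_iff by blast
  have "((\<lambda>\<epsilon>. C * \<epsilon>) \<longlongrightarrow> 0) (at_right 0)"
    by (intro tendsto_mult_right_zero tendsto_ident_at)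
  then have "\<forall>\<^sub>F \<epsilon> in at_right 0. C * \<epsilon> < r"
    using \<open>0 < r\<close> by (rule order_tendstoD(2))
  with C show ?thesis
    by eventually_elim (auto simp: vd_def intro: order.strict_trans1)
qed

lemma smooth_curve_has_vector_derivative:
  assumes "smooth_curve g"
  shows "(g has_vector_derivative vector_derivative g (at t)) (at t)"
    and "((\<lambda>s. vector_derivative g (at s)) has_vector_derivative vd 2 g t) (at t)"
  using assms[unfolded smooth_curve_def, rule_format, of 0 t]
    assms[unfolded smooth_curve_def, rule_format, of 1 t]
  by (simp_all add: vd_def numeral_2_eq_2)

lemma has_vector_derivative_vec_nth:
  fixes g :: "real \<Rightarrow> real^'n"
  assumes "(g has_vector_derivative g') (at t)"
  shows "((\<lambda>t. g t $ i) has_real_derivative g' $ i) (at t)"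
  using bounded_linear.has_vector_derivative[OF bounded_linear_vec_nth assms, of i]
  by (simp add: has_real_derivative_iff_has_vector_derivative)

lemma smooth_curve_component_deriv:
  assumes "smooth_curve g"
  shows "((\<lambda>t. g t $ i) has_real_derivative vector_derivative g (at t) $ i) (at t)"
    and "continuous_on UNIV (\<lambda>t. vector_derivative g (at t) $ i)"
proof -
  show "((\<lambda>t. g t $ i) has_real_derivative vector_derivative g (at t) $ i) (at t)" for t
    using smooth_curve_has_vector_derivative(1)[OF assms] by (rule has_vector_derivative_vec_nth)
  have "((\<lambda>t. vector_derivative g (at t) $ i) has_real_derivative vd 2 g t $ i) (at t)" for t
    using smooth_curve_has_vector_derivative(2)[OF assms] by (rule has_vector_derivative_vec_nth)
  then show "continuous_on UNIV (\<lambda>t. vector_derivative g (at t) $ i)"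
    by (meson DERIV_isCont continuous_at_imp_continuous_on)
qed

lemma norm_vec4_squared:
  "(norm (w::real^4))\<^sup>2 = (w$1)\<^sup>2 + (w$2)\<^sup>2 + (w$3)\<^sup>2 + (w$4)\<^sup>2"
  unfolding norm_vec_def L2_set_def by (simp add: sum_4)

lemma time_component_ge_of_causal:
  fixes w :: "real^4"
  assumes "0 < \<beta>" and causal: "\<beta> * ((w$2)\<^sup>2 + (w$3)\<^sup>2) + (w$4)\<^sup>2 \<le> (w$1)\<^sup>2"
    and "1/2 \<le> (norm w)\<^sup>2"
  shows "sqrt (min \<beta> 1 / (2 * (1 + min \<beta> 1))) \<le> \<bar>w$1\<bar>"
proof -
  define c where "c = min \<beta> 1"
  have c: "0 < c" "c \<le> \<beta>" "c \<le> 1"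
    using \<open>0 < \<beta>\<close> by (auto simp: c_def)
  have "c * ((w$2)\<^sup>2 + (w$3)\<^sup>2) \<le> \<beta> * ((w$2)\<^sup>2 + (w$3)\<^sup>2)"
    using c by (intro mult_right_mono) auto
  moreover have "c * (w$4)\<^sup>2 \<le> (w$4)\<^sup>2"
    using c by (intro mult_left_le_one_le) auto
  ultimately have "c * (norm w)\<^sup>2 \<le> (1 + c) * (w$1)\<^sup>2"
    using causal by (simp add: norm_vec4_squared algebra_simps)
  moreover have "c / 2 \<le> c * (norm w)\<^sup>2"
    using c \<open>1/2 \<le> (norm w)\<^sup>2\<close> by simp
  ultimately have "c / 2 \<le> (1 + c) * (w$1)\<^sup>2"
    by linarith
  then have "c / (2 * (1 + c)) \<le> (w$1)\<^sup>2"
    using c by (simp add: field_simps)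
  then show ?thesis
    unfolding c_def[symmetric] by (metis real_sqrt_abs real_sqrt_le_mono)
qed

lemma unit_causal_curve_time_speed_ge:
  fixes \<gamma> :: "real \<Rightarrow> real \<Rightarrow> real^4"
  assumes "0 < \<beta>"
    and rho_ge: "\<And>\<epsilon> x y z v1 v2 v3. \<epsilon> \<in> {0<..1} \<Longrightarrow>
           \<beta> * (v1\<^sup>2 + v2\<^sup>2) + v3\<^sup>2 \<le> rho \<alpha> \<phi> \<epsilon> x y z v1 v2 v3"
    and unit: "negligible_net (\<lambda>\<epsilon> s. (norm (vector_derivative (\<gamma> \<epsilon>) (at s)))\<^sup>2 - 1)"
    and causal: "\<forall>\<^sub>F \<epsilon> in at_right 0. \<forall>s. gmet \<alpha> \<phi> \<epsilon> (\<gamma> \<epsilon> s) (vector_derivative (\<gamma> \<epsilon>) (at s)) \<le> 0"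
  obtains a where "0 < a"
    and "\<And>T. \<forall>\<^sub>F \<epsilon> in at_right 0. \<forall>t\<in>{-T..T}. a \<le> \<bar>vector_derivative (\<gamma> \<epsilon>) (at t) $ 1\<bar>"
proof
  show "0 < sqrt (min \<beta> 1 / (2 * (1 + min \<beta> 1)))"
    using \<open>0 < \<beta>\<close> by simp
  fix T :: real
  have "\<forall>\<^sub>F \<epsilon> in at_right 0. \<forall>t\<in>{-T..T}. \<bar>(norm (vector_derivative (\<gamma> \<epsilon>) (at t)))\<^sup>2 - 1\<bar> < 1/2"
    using negligible_net_eventually_small[OF unit compact_Icc, of "1/2"] by simp
  moreover have "\<forall>\<^sub>F \<epsilon> in at_right (0::real). \<epsilon> \<in> {0<..1}"
    by (rule eventually_at_right_0_if_all)
  ultimately show "\<forall>\<^sub>F \<epsilon> in at_right 0. \<forall>t\<in>{-T..T}.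
      sqrt (min \<beta> 1 / (2 * (1 + min \<beta> 1))) \<le> \<bar>vector_derivative (\<gamma> \<epsilon>) (at t) $ 1\<bar>"
    using causal
  proof eventually_elim
    case (elim \<epsilon>)
    show ?case
    proof
      fix t assume "t \<in> {-T..T}"
      define w where "w = vector_derivative (\<gamma> \<epsilon>) (at t)"
      have "\<bar>(norm w)\<^sup>2 - 1\<bar> < 1/2"
        using elim(1) \<open>t \<in> {-T..T}\<close> unfolding w_def by blast
      then have "1/2 \<le> (norm w)\<^sup>2"
        by arith
      have "\<beta> * ((w$2)\<^sup>2 + (w$3)\<^sup>2) + (w$4)\<^sup>2 \<le> (w$1)\<^sup>2"
        using elim(3)[rule_format, of t] 
          rho_ge[OF elim(2), of "w$2" "w$3" "w$4" "\<gamma> \<epsilon> t $ 2" "\<gamma> \<epsilon> t $ 3" "\<gamma> \<epsilon> t $ 4"]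
        by (simp add: gmet_def w_def)
      from this \<open>1/2 \<le> (norm w)\<^sup>2\<close> show "sqrt (min \<beta> 1 / (2 * (1 + min \<beta> 1))) \<le> \<bar>w$1\<bar>"
        by (rule time_component_ge_of_causal[OF \<open>0 < \<beta>\<close>])
    qed
  qed
qed

lemma eventually_zero_of_abs_deriv_ge:
  fixes f f' :: "real \<Rightarrow> real \<Rightarrow> real"
  assumes deriv: "\<forall>\<^sub>F \<epsilon> in at_right 0. \<forall>t. (f \<epsilon> has_real_derivative f' \<epsilon> t) (at t)"
    and cont: "\<forall>\<^sub>F \<epsilon> in at_right 0. continuous_on UNIV (f' \<epsilon>)"
    and "0 < a"
    and speed: "\<And>T. \<forall>\<^sub>F \<epsilon> in at_right 0. \<forall>t\<in>{-T..T}. a \<le> \<bar>f' \<epsilon> t\<bar>"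
    and start: "\<forall>\<^sub>F \<epsilon> in at_right 0. \<bar>f \<epsilon> 0\<bar> \<le> R"
  obtains s where "cs_point s" "\<forall>\<^sub>F \<epsilon> in at_right 0. f \<epsilon> (s \<epsilon>) = 0"
proof -
  define T where "T = R / a + 1"
  define s where "s \<epsilon> = (SOME t. t \<in> {-T..T} \<and> f \<epsilon> t = 0)" for \<epsilon>
  have "R < a * T"
    using \<open>0 < a\<close> by (simp add: T_def field_simps)
  have "\<forall>\<^sub>F \<epsilon> in at_right 0. \<exists>t\<in>{-T..T}. f \<epsilon> t = 0"
    using deriv cont speed[of T] start
  proof eventually_elim
    case (elim \<epsilon>)
    show ?case
      by (rule exists_zero_of_abs_deriv_ge[where f' = "f' \<epsilon>", OF _ _ \<open>0 < a\<close>])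
        (use elim \<open>R < a * T\<close> in \<open>auto intro: continuous_on_subset\<close>)
  qed
  then have "\<forall>\<^sub>F \<epsilon> in at_right 0. s \<epsilon> \<in> {-T..T} \<and> f \<epsilon> (s \<epsilon>) = 0"
    unfolding s_def by eventually_elim (rule someI_ex, blast)
  then have "\<forall>\<^sub>F \<epsilon> in at_right 0. norm (s \<epsilon>) \<le> T" "\<forall>\<^sub>F \<epsilon> in at_right 0. f \<epsilon> (s \<epsilon>) = 0"
    by (auto elim: eventually_mono)
  then show thesis
    using that unfolding cs_point_iff_eventually by blast
qed

lemma pt_equiv_of_abs_deriv_ge:
  fixes f f' :: "real \<Rightarrow> real \<Rightarrow> real"
  assumes deriv: "\<forall>\<^sub>F \<epsilon> in at_right 0. \<forall>t. (f \<epsilon> has_real_derivative f' \<epsilon> t) (at t)"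
    and cont: "\<forall>\<^sub>F \<epsilon> in at_right 0. continuous_on UNIV (f' \<epsilon>)"
    and "0 < a"
    and speed: "\<And>T. \<forall>\<^sub>F \<epsilon> in at_right 0. \<forall>t\<in>{-T..T}. a \<le> \<bar>f' \<epsilon> t\<bar>"
    and "cs_point s" and zero: "\<forall>\<^sub>F \<epsilon> in at_right 0. f \<epsilon> (s \<epsilon>) = 0"
    and "cs_point s'" and small: "\<And>m. \<exists>C. \<forall>\<^sub>F \<epsilon> in at_right 0. \<bar>f \<epsilon> (s' \<epsilon>)\<bar> \<le> C * \<epsilon> ^ m"
  shows "pt_equiv s s'"
  unfolding pt_equiv_iff_eventually
proof
  fix m :: nat
  obtain C where C: "\<forall>\<^sub>F \<epsilon> in at_right 0. \<bar>f \<epsilon> (s' \<epsilon>)\<bar> \<le> C * \<epsilon> ^ m"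
    using small by blast
  obtain B B' where B: "\<forall>\<^sub>F \<epsilon> in at_right 0. \<bar>s \<epsilon>\<bar> \<le> B"
    and B': "\<forall>\<^sub>F \<epsilon> in at_right 0. \<bar>s' \<epsilon>\<bar> \<le> B'"
    using \<open>cs_point s\<close> \<open>cs_point s'\<close> unfolding cs_point_iff_eventually by auto
  define T where "T = max B B'"
  have "\<forall>\<^sub>F \<epsilon> in at_right 0. \<bar>s \<epsilon> - s' \<epsilon>\<bar> \<le> C / a * \<epsilon> ^ m"
    using deriv cont speed[of T] zero C B B'
  proof eventually_elim
    case (elim \<epsilon>)
    have "s \<epsilon> \<in> {-T..T}" "s' \<epsilon> \<in> {-T..T}"
      using elim(6,7) by (auto simp: T_def)
    then have "a * \<bar>s \<epsilon> - s' \<epsilon>\<bar> \<le> \<bar>f \<epsilon> (s \<epsilon>) - f \<epsilon> (s' \<epsilon>)\<bar>"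
      using elim(1-3) by (intro abs_diff_ge_of_abs_deriv_ge[where f' = "f' \<epsilon>", OF _ _ \<open>0 < a\<close>])
        (auto intro: continuous_on_subset)
    also have "\<dots> \<le> C * \<epsilon> ^ m"
      using elim(4,5) by simp
    finally show ?case
      using \<open>0 < a\<close> by (simp add: field_simps)
  qed
  then have "\<forall>\<^sub>F \<epsilon> in at_right 0. norm (s \<epsilon> - s' \<epsilon>) \<le> C / a * \<epsilon> ^ m"
    by simp
  then show "\<exists>C. \<forall>\<^sub>F \<epsilon> in at_right 0. norm (s \<epsilon> - s' \<epsilon>) \<le> C * \<epsilon> ^ m" ..
qed

lemma in_gen_c_SsliceI:
  assumes "cs_point p" and time_zero: "\<forall>\<^sub>F \<epsilon> in at_right 0. p \<epsilon> $ 1 = 0"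
  shows "in_gen_c Sslice p"
  unfolding in_gen_c_def
proof (intro exI conjI)
  define q where "q \<epsilon> = (\<chi> i. if i = 1 then 0 else p \<epsilon> $ i)" for \<epsilon>
  show "\<forall>\<epsilon>\<in>{0<..1}. q \<epsilon> \<in> Sslice"
    by (simp add: Sslice_def q_def)
  have q_le: "norm (q \<epsilon>) \<le> norm (p \<epsilon>)" for \<epsilon>
    by (rule norm_le_componentwise_cart) (simp add: q_def)
  obtain C where "\<forall>\<^sub>F \<epsilon> in at_right 0. norm (p \<epsilon>) \<le> C"
    using \<open>cs_point p\<close> unfolding cs_point_iff_eventually by blast
  then have "\<forall>\<^sub>F \<epsilon> in at_right 0. norm (q \<epsilon>) \<le> C"
    by eventually_elim (use q_le in \<open>rule order.trans\<close>)
  then show "cs_point q"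
    unfolding cs_point_iff_eventually ..
  from time_zero have "\<forall>\<^sub>F \<epsilon> in at_right 0. p \<epsilon> = q \<epsilon>"
    by eventually_elim (simp add: q_def vec_eq_iff)
  then show "pt_equiv p q"
    unfolding pt_equiv_iff_eventually by (auto intro!: exI[of _ 0] elim!: eventually_mono)
qed

lemma in_gen_c_Sslice_time_small:
  assumes "in_gen_c Sslice p"
  shows "\<exists>C. \<forall>\<^sub>F \<epsilon> in at_right 0. \<bar>p \<epsilon> $ 1\<bar> \<le> C * \<epsilon> ^ m"
proof -
  obtain q where q: "\<forall>\<epsilon>\<in>{0<..1}. q \<epsilon> \<in> Sslice" and "pt_equiv p q"
    using assms unfolding in_gen_c_def by blast
  then obtain C where C: "\<forall>\<^sub>F \<epsilon> in at_right 0. norm (p \<epsilon> - q \<epsilon>) \<le> C * \<epsilon> ^ m"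
    unfolding pt_equiv_iff_eventually by blast
  have "\<forall>\<^sub>F \<epsilon> in at_right (0::real). q \<epsilon> $ 1 = 0"
    using q by (intro eventually_at_right_0_if_all) (auto simp: Sslice_def)
  with C have "\<forall>\<^sub>F \<epsilon> in at_right 0. \<bar>p \<epsilon> $ 1\<bar> \<le> C * \<epsilon> ^ m"
    by eventually_elim (metis component_le_norm_cart diff_zero order.trans vector_minus_component)
  then show ?thesis ..
qed

theorem mainTheorem4:
  fixes \<alpha> :: real
    and \<phi> :: "real \<times> real \<Rightarrow> real"
    and \<gamma> :: "real \<Rightarrow> real \<Rightarrow> real^4"
  assumes alpha: "0 < \<alpha>" "\<alpha> < 1"
    and phi_schwartz: "schwartz \<phi>"
    and phi_int: "(\<integral>w. \<phi> w \<partial>lborel) = 1"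
    and beta: "\<exists>\<beta>>0. \<forall>\<epsilon>\<in>{0<..1}. \<forall>x y z v1 v2 v3.
                 rho \<alpha> \<phi> \<epsilon> x y z v1 v2 v3 \<ge> \<beta> * (v1\<^sup>2 + v2\<^sup>2) + v3\<^sup>2"
    and gamma: "gen_curve_rep \<gamma>"
    and unit: "negligible_net (\<lambda>\<epsilon> s. (norm (vector_derivative (\<gamma> \<epsilon>) (at s)))\<^sup>2 - 1)"
    and timelike: "\<exists>q\<ge>0. \<exists>\<epsilon>0\<in>{0<..1}. \<forall>s. \<forall>\<epsilon>\<in>{0<..<\<epsilon>0}.
        gmet \<alpha> \<phi> \<epsilon> (\<gamma> \<epsilon> s) (vector_derivative (\<gamma> \<epsilon>) (at s)) \<le> - (\<epsilon> powr q)"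
  shows "\<exists>s::real \<Rightarrow> real. cs_point s \<and> in_gen_c Sslice (\<lambda>\<epsilon>. \<gamma> \<epsilon> (s \<epsilon>))
           \<and> (\<forall>s'::real \<Rightarrow> real. cs_point s' \<and> in_gen_c Sslice (\<lambda>\<epsilon>. \<gamma> \<epsilon> (s' \<epsilon>))
                \<longrightarrow> pt_equiv s s')"
proof -
  obtain \<beta> where "0 < \<beta>" and rho_ge: "\<And>\<epsilon> x y z v1 v2 v3. \<epsilon> \<in> {0<..1} \<Longrightarrow>
      \<beta> * (v1\<^sup>2 + v2\<^sup>2) + v3\<^sup>2 \<le> rho \<alpha> \<phi> \<epsilon> x y z v1 v2 v3"
    using beta by blast
  have "c_bounded_net \<gamma>" and smooth: "\<forall>\<^sub>F \<epsilon> in at_right 0. smooth_curve (\<gamma> \<epsilon>)"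
    using gamma unfolding gen_curve_rep_def moderate_net_def
    by (auto intro: eventually_at_right_0_if_all)
  from smooth have deriv: "\<forall>\<^sub>F \<epsilon> in at_right 0. \<forall>t.
      ((\<lambda>t. \<gamma> \<epsilon> t $ 1) has_real_derivative vector_derivative (\<gamma> \<epsilon>) (at t) $ 1) (at t)"
    by eventually_elim (blast intro: smooth_curve_component_deriv)
  from smooth have cont: "\<forall>\<^sub>F \<epsilon> in at_right 0. continuous_on UNIV (\<lambda>t. vector_derivative (\<gamma> \<epsilon>) (at t) $ 1)"
    by eventually_elim (rule smooth_curve_component_deriv)
  obtain q \<epsilon>0 where "\<epsilon>0 \<in> {0<..1}" and timelike': "\<And>s \<epsilon>. \<epsilon> \<in> {0<..<\<epsilon>0} \<Longrightarrow>
      gmet \<alpha> \<phi> \<epsilon> (\<gamma> \<epsilon> s) (vector_derivative (\<gamma> \<epsilon>) (at s)) \<le> - (\<epsilon> powr q)"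
    using timelike by blast
  then have "\<forall>\<^sub>F \<epsilon> in at_right 0. \<forall>s. gmet \<alpha> \<phi> \<epsilon> (\<gamma> \<epsilon> s) (vector_derivative (\<gamma> \<epsilon>) (at s)) \<le> 0"
    unfolding eventually_at_right_0_iff
    by (intro bexI[of _ \<epsilon>0] ballI allI order.trans[OF timelike']) auto
  then obtain a where "0 < a"
    and speed: "\<And>T. \<forall>\<^sub>F \<epsilon> in at_right 0. \<forall>t\<in>{-T..T}. a \<le> \<bar>vector_derivative (\<gamma> \<epsilon>) (at t) $ 1\<bar>"
    using unit_causal_curve_time_speed_ge[OF \<open>0 < \<beta>\<close> rho_ge unit] by blast
  obtain R where "\<forall>\<^sub>F \<epsilon> in at_right 0. \<forall>t\<in>{0}. norm (\<gamma> \<epsilon> t) \<le> R"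
    using c_bounded_net_eventually_bounded[OF \<open>c_bounded_net \<gamma>\<close> compact_sing] .
  then have start: "\<forall>\<^sub>F \<epsilon> in at_right 0. \<bar>\<gamma> \<epsilon> 0 $ 1\<bar> \<le> R"
    by eventually_elim (use component_le_norm_cart in \<open>force intro: order.trans\<close>)
  obtain s where "cs_point s" and zero: "\<forall>\<^sub>F \<epsilon> in at_right 0. \<gamma> \<epsilon> (s \<epsilon>) $ 1 = 0"
    using eventually_zero_of_abs_deriv_ge[OF deriv cont \<open>0 < a\<close> speed start] .
  have "in_gen_c Sslice (\<lambda>\<epsilon>. \<gamma> \<epsilon> (s \<epsilon>))"
    using in_gen_c_SsliceI[OF cs_point_comp_c_bounded_net[OF \<open>c_bounded_net \<gamma>\<close> \<open>cs_point s\<close>] zero] .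
  moreover have "pt_equiv s s'" if "cs_point s'" "in_gen_c Sslice (\<lambda>\<epsilon>. \<gamma> \<epsilon> (s' \<epsilon>))" for s'
    using pt_equiv_of_abs_deriv_ge[OF deriv cont \<open>0 < a\<close> speed \<open>cs_point s\<close> zero \<open>cs_point s'\<close>]
      in_gen_c_Sslice_time_small[OF that(2)] by blast
  ultimately show ?thesis
    using \<open>cs_point s\<close> by blast
qed

end
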